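(* Let $\varphi:[0,\infty)\to[0,\infty)$ be measurable with $\int_0^\infty\varphi=1$, $F(x)=\int_0^x\varphi$, and assume that for some $\alpha\in(0,1)$ and $K>0$, $\lim_{x\to\infty}\alpha x^\alpha(1-F(x))=K$. Let $\delta=K\Gamma(1-\alpha)/\alpha$. Let $(a_n)$ be a sequence with $a_n>1$, $a_n\to1$ and $n^\alpha(a_n-1)\to\lambda\delta$ for some $\lambda>0$. Let $b_n>0$ be the unique positive number with $\int_0^\infty e^{-b_ns}a_n\varphi(s)\,ds=1/a_n$. Then $$\lim_{n\to\infty}nb_n=(2\lambda)^{1/\alpha}.$$ *)

theory Defs
  imports "HOL-Analysis.Analysis"
begin

end

theory Submission
  imports Defs
begin

(*
  Let Q(c) = 1 - L(c), where L is the Laplace transform of phi. Integrating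
  1 - exp(-c s) = int_0^s c exp(-c t) dt against phi and exchanging the integrals
  (Tonelli) gives Q(c) = int_0^oo exp(-u) (1 - F(u/c)) du. Since x^alpha (1 - F x)
  tends to K/alpha, dominated convergence against u^(-alpha) exp(-u) yields the
  Abelian asymptotics Q(c) ~ delta c^alpha as c -> 0+.
  The defining equation of b_n says Q(b_n) = 1 - 1/a_n^2 ~ 2 (a_n - 1) ~ 2 lam delta n^(-alpha).
  Since Q is monotone and positive near 0, this forces b_n -> 0, and comparing the two
  asymptotics gives (n b_n)^alpha -> 2 lam.
*)

lemma has_bochner_integral_Gamma_real:
  fixes s :: real
  assumes "s > 0"
  shows "has_bochner_integral lborel (\<lambda>t. indicator {0..} t * t powr (s - 1) / exp t) (Gamma s)"
proof -
  have "0 \<le> Gamma s"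
    using assms by (simp add: Gamma_real_pos less_imp_le)
  then show ?thesis
    using Gamma_conv_nn_integral_real[OF assms]
    by (subst has_bochner_integral_iff, subst nn_integral_eq_integrable[symmetric]) auto
qed

lemma bounded_powr_mult_if_tendsto_at_top:
  fixes G :: "real \<Rightarrow> real" and \<alpha> B C :: real
  assumes G_bdd: "\<And>x. x > 0 \<Longrightarrow> \<bar>G x\<bar> \<le> B" and \<alpha>: "\<alpha> > 0"
    and G_tail: "((\<lambda>x. x powr \<alpha> * G x) \<longlongrightarrow> C) at_top"
  obtains M where "\<And>y. y > 0 \<Longrightarrow> \<bar>y powr \<alpha> * G y\<bar> \<le> M"
proof -
  have "\<forall>\<^sub>F y in at_top. \<bar>y powr \<alpha> * G y - C\<bar> < 1"
    using tendstoD[OF G_tail, of 1] by (simp add: dist_real_def)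
  then obtain Y where Y: "\<And>y. y \<ge> Y \<Longrightarrow> \<bar>y powr \<alpha> * G y - C\<bar> < 1"
    by (auto simp: eventually_at_top_linorder)
  have "\<bar>y powr \<alpha> * G y\<bar> \<le> max (\<bar>C\<bar> + 1) (max Y 1 powr \<alpha> * B)" if "y > 0" for y
  proof (cases "y \<ge> Y")
    case False
    have "\<bar>y powr \<alpha> * G y\<bar> = y powr \<alpha> * \<bar>G y\<bar>"
      by (simp add: abs_mult)
    also have "\<dots> \<le> max Y 1 powr \<alpha> * B"
      using False that \<alpha> G_bdd[OF that] by (intro mult_mono powr_mono2) auto
    finally show ?thesis
      by simp
  qed (use Y in fastforce)
  then show thesis
    by (rule that)
qed

lemma tendsto_integral_Gamma_density_rescaled:
  fixes G :: "real \<Rightarrow> real" and \<alpha> B C :: real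
  assumes G_meas[measurable]: "G \<in> borel_measurable borel"
    and G_bdd: "\<And>x. x > 0 \<Longrightarrow> \<bar>G x\<bar> \<le> B"
    and \<alpha>: "0 < \<alpha>" "\<alpha> < 1"
    and G_tail: "((\<lambda>x. x powr \<alpha> * G x) \<longlongrightarrow> C) at_top"
  shows "((\<lambda>x. \<integral>u. indicator {0..} u * u powr (- \<alpha>) / exp u * ((u * x) powr \<alpha> * G (u * x)) \<partial>lborel)
           \<longlongrightarrow> C * Gamma (1 - \<alpha>)) at_top"
proof -
  obtain M where bound: "\<And>y. y > 0 \<Longrightarrow> \<bar>y powr \<alpha> * G y\<bar> \<le> M"
    using bounded_powr_mult_if_tendsto_at_top[OF G_bdd _ G_tail] \<alpha> by blast
  define \<gamma> where "\<gamma> u = indicator {0..} u * u powr (- \<alpha>) / exp u" for u :: real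
  have \<gamma>: "has_bochner_integral lborel \<gamma> (Gamma (1 - \<alpha>))"
    using has_bochner_integral_Gamma_real[of "1 - \<alpha>"] \<alpha> by (simp add: \<gamma>_def[abs_def])
  have \<gamma>_nonneg: "\<gamma> u \<ge> 0" for u
    by (simp add: \<gamma>_def)
  have \<gamma>_eq_0: "\<gamma> u = 0" if "u \<le> 0" for u
    using that by (cases "u = 0") (auto simp: \<gamma>_def)
  define S where "S x u = \<gamma> u * ((u * x) powr \<alpha> * G (u * x))" for x u
  have "((\<lambda>x. integral\<^sup>L lborel (S x)) \<longlongrightarrow> integral\<^sup>L lborel (\<lambda>u. \<gamma> u * C)) at_top"
  proof (rule integral_dominated_convergence_at_top[where w = "\<lambda>u. \<gamma> u * M"])
    show "(\<lambda>u. \<gamma> u * C) \<in> borel_measurable lborel" "\<And>x. S x \<in> borel_measurable lborel"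
      by (auto simp: \<gamma>_def[abs_def] S_def[abs_def])
    show "integrable lborel (\<lambda>u. \<gamma> u * M)"
      using \<gamma> by (simp add: has_bochner_integral_iff)
    show "AE u in lborel. ((\<lambda>x. S x u) \<longlongrightarrow> \<gamma> u * C) at_top"
    proof (intro AE_I2)
      fix u :: real
      show "((\<lambda>x. S x u) \<longlongrightarrow> \<gamma> u * C) at_top"
      proof (cases "u > 0")
        case True
        then have "filterlim (\<lambda>x. u * x) at_top at_top"
          by (intro filterlim_tendsto_pos_mult_at_top[OF tendsto_const True filterlim_ident])
        then show ?thesis
          unfolding S_def by (intro tendsto_mult tendsto_const filterlim_compose[OF G_tail])
      qed (simp add: S_def \<gamma>_eq_0)
    qed
    show "\<forall>\<^sub>F x in at_top. AE u in lborel. norm (S x u) \<le> \<gamma> u * M"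
      using eventually_gt_at_top[of 0]
    proof eventually_elim
      case (elim x)
      show ?case
      proof (intro AE_I2)
        fix u :: real
        show "norm (S x u) \<le> \<gamma> u * M"
        proof (cases "u > 0")
          case True
          then show ?thesis
            using bound[of "u * x"] elim \<gamma>_nonneg[of u]
            by (simp add: S_def abs_mult mult_left_mono)
        qed (simp add: S_def \<gamma>_eq_0)
      qed
    qed
  qed
  moreover have "integral\<^sup>L lborel (\<lambda>u. \<gamma> u * C) = C * Gamma (1 - \<alpha>)"
    using \<gamma> by (simp add: has_bochner_integral_iff mult.commute)
  ultimately show ?thesis
    by (simp only: S_def[abs_def] \<gamma>_def)
qed

lemma tendsto_Laplace_regular_tail:
  fixes G :: "real \<Rightarrow> real" and \<alpha> B C :: real
  assumes G_meas[measurable]: "G \<in> borel_measurable borel"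
    and G_bdd: "\<And>x. x > 0 \<Longrightarrow> \<bar>G x\<bar> \<le> B"
    and \<alpha>: "0 < \<alpha>" "\<alpha> < 1"
    and G_tail: "((\<lambda>x. x powr \<alpha> * G x) \<longlongrightarrow> C) at_top"
  shows "((\<lambda>c. (LINT u:{0<..}|lborel. exp (- u) * G (u / c)) / c powr \<alpha>)
           \<longlongrightarrow> C * Gamma (1 - \<alpha>)) (at_right 0)"
  unfolding filterlim_at_right_to_top
proof (rule Lim_transform_eventually[OF tendsto_integral_Gamma_density_rescaled[OF assms]])
  show "\<forall>\<^sub>F x in at_top.
      (\<integral>u. indicator {0..} u * u powr (- \<alpha>) / exp u * ((u * x) powr \<alpha> * G (u * x)) \<partial>lborel)
      = (LINT u:{0<..}|lborel. exp (- u) * G (u / inverse x)) / inverse x powr \<alpha>"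
    using eventually_gt_at_top[of 0]
  proof eventually_elim
    case (elim x)
    have "(\<lambda>u. indicator {0..} u * u powr (- \<alpha>) / exp u * ((u * x) powr \<alpha> * G (u * x)))
        = (\<lambda>u. x powr \<alpha> * (indicator {0<..} u *\<^sub>R (exp (- u) * G (u * x))))"
    proof
      fix u :: real
      show "indicator {0..} u * u powr (- \<alpha>) / exp u * ((u * x) powr \<alpha> * G (u * x))
          = x powr \<alpha> * (indicator {0<..} u *\<^sub>R (exp (- u) * G (u * x)))"
      proof (cases "u > 0")
        case True
        then show ?thesis
          using elim by (simp add: powr_mult powr_minus exp_minus field_simps)
      qed (cases "u = 0"; simp)
    qed
    then show ?case
      by (simp only:) (simp add: set_lebesgue_integral_def inverse_powr divide_inverse mult.commute)
  qed
qed

lemma nn_integral_exponential_density_Ioo: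
  fixes c s :: real
  assumes c: "c > 0" and s: "s \<ge> 0"
  shows "(\<integral>\<^sup>+t\<in>{0<..<s}. ennreal (c * exp (- c * t)) \<partial>lborel) = ennreal (1 - exp (- c * s))"
proof -
  have "((\<lambda>t. c * exp (- c * t)) has_integral (- exp (- c * s)) - (- exp (- c * 0))) {0..s}"
  proof (rule fundamental_theorem_of_calculus)
    fix t assume "t \<in> {0..s}"
    show "((\<lambda>t. - exp (- c * t)) has_vector_derivative c * exp (- c * t)) (at t within {0..s})"
      by (auto intro!: derivative_eq_intros simp: has_real_derivative_iff_has_vector_derivative[symmetric])
  qed (use s in simp)
  then have "((\<lambda>t. c * exp (- c * t)) has_integral 1 - exp (- c * s)) {0<..<s}"
    by (simp add: has_integral_open_interval[of _ _ 0 s, unfolded box_real cbox_interval])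
  then show ?thesis
    using c by (intro nn_integral_has_integral_lebesgue') auto
qed

lemma nn_integral_one_minus_exp_eq_tail:
  fixes f :: "real \<Rightarrow> ennreal" and c :: real
  assumes f[measurable]: "f \<in> borel_measurable borel" and c: "c > 0"
  shows "(\<integral>\<^sup>+s\<in>{0..}. ennreal (1 - exp (- c * s)) * f s \<partial>lborel)
       = (\<integral>\<^sup>+t\<in>{0<..}. ennreal (c * exp (- c * t)) * (\<integral>\<^sup>+s\<in>{t<..}. f s \<partial>lborel) \<partial>lborel)"
proof -
  define k where "k t = ennreal (c * exp (- c * t))" for t
  have "(\<integral>\<^sup>+s\<in>{0..}. ennreal (1 - exp (- c * s)) * f s \<partial>lborel)
      = (\<integral>\<^sup>+s. \<integral>\<^sup>+t. k t * indicator {0<..} t * (f s * indicator {t<..} s) \<partial>lborel \<partial>lborel)"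
  proof (rule nn_integral_cong)
    fix s :: real
    show "ennreal (1 - exp (- c * s)) * f s * indicator {0..} s
        = (\<integral>\<^sup>+t. k t * indicator {0<..} t * (f s * indicator {t<..} s) \<partial>lborel)"
    proof (cases "s \<ge> 0")
      case True
      have "(\<integral>\<^sup>+t. k t * indicator {0<..} t * (f s * indicator {t<..} s) \<partial>lborel)
          = (\<integral>\<^sup>+t. k t * indicator {0<..<s} t * f s \<partial>lborel)"
        using True by (intro nn_integral_cong) (auto simp: indicator_def)
      also have "\<dots> = (\<integral>\<^sup>+t\<in>{0<..<s}. k t \<partial>lborel) * f s"
        by (rule nn_integral_multc) (auto simp: k_def[abs_def])
      also have "\<dots> = ennreal (1 - exp (- c * s)) * f s"
        using nn_integral_exponential_density_Ioo[OF c True] by (simp add: k_def)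
      finally show ?thesis
        using True by simp
    next
      case False
      then have vanish: "k t * indicator {0<..} t * (f s * indicator {t<..} s) = 0" for t
        by (auto simp: indicator_def)
      show ?thesis
        using False by (simp only: vanish) simp
    qed
  qed
  also have "\<dots> = (\<integral>\<^sup>+t. \<integral>\<^sup>+s. k t * indicator {0<..} t * (f s * indicator {t<..} s) \<partial>lborel \<partial>lborel)"
    by (subst lborel_pair.Fubini')
      (auto simp: k_def[abs_def] case_prod_unfold indicator_def cong: measurable_cong_sets)
  also have "\<dots> = (\<integral>\<^sup>+t. k t * indicator {0<..} t * (\<integral>\<^sup>+s\<in>{t<..}. f s \<partial>lborel) \<partial>lborel)"
    by (simp add: nn_integral_cmult k_def)
  finally show ?thesis
    by (simp add: k_def mult_ac)
qed

lemma nn_integral_exponential_density_rescale: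
  fixes T :: "real \<Rightarrow> ennreal" and c :: real
  assumes T[measurable]: "T \<in> borel_measurable borel" and c: "c > 0"
  shows "(\<integral>\<^sup>+t\<in>{0<..}. ennreal (c * exp (- c * t)) * T t \<partial>lborel)
       = (\<integral>\<^sup>+u\<in>{0<..}. ennreal (exp (- u)) * T (u / c) \<partial>lborel)"
proof -
  have "(\<integral>\<^sup>+t\<in>{0<..}. ennreal (c * exp (- c * t)) * T t \<partial>lborel)
      = ennreal \<bar>1 / c\<bar> * (\<integral>\<^sup>+u. ennreal (c * exp (- c * (0 + 1 / c * u))) * T (0 + 1 / c * u)
          * indicator {0<..} (0 + 1 / c * u) \<partial>lborel)"
    using c by (intro nn_integral_real_affine) auto
  also have "(\<integral>\<^sup>+u. ennreal (c * exp (- c * (0 + 1 / c * u))) * T (0 + 1 / c * u)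
          * indicator {0<..} (0 + 1 / c * u) \<partial>lborel)
      = (\<integral>\<^sup>+u. ennreal c * (ennreal (exp (- u)) * T (u / c) * indicator {0<..} u) \<partial>lborel)"
    using c by (intro nn_integral_cong) (auto simp: ennreal_mult indicator_def zero_less_divide_iff mult.assoc)
  also have "\<dots> = ennreal c * (\<integral>\<^sup>+u\<in>{0<..}. ennreal (exp (- u)) * T (u / c) \<partial>lborel)"
    by (rule nn_integral_cmult) auto
  finally show ?thesis
    using c by (simp add: mult.assoc[symmetric] ennreal_mult[symmetric])
qed

lemma tendsto_zero_if_mono_on_image_tendsto_zero:
  fixes Q :: "real \<Rightarrow> real" and b :: "nat \<Rightarrow> real"
  assumes mono: "mono_on {0<..} Q" and Q_pos: "\<forall>\<^sub>F c in at_right 0. Q c > 0"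
    and b_pos: "\<And>n. b n > 0" and Q_b: "(\<lambda>n. Q (b n)) \<longlonglongrightarrow> 0"
  shows "b \<longlonglongrightarrow> 0"
proof (rule order_tendstoI)
  fix r :: real
  assume "r > 0"
  obtain c where c: "0 < c" "c < r" "Q c > 0"
  proof -
    from Q_pos obtain d where "d > 0" "\<And>c. 0 < c \<Longrightarrow> c < d \<Longrightarrow> Q c > 0"
      by (auto simp: eventually_at_right_field)
    then show thesis
      using \<open>r > 0\<close> by (intro that[of "min d r / 2"]) auto
  qed
  show "\<forall>\<^sub>F n in sequentially. b n < r"
    using order_tendstoD(2)[OF Q_b \<open>Q c > 0\<close>]
  proof eventually_elim
    case (elim n)
    have "b n < c"
    proof (rule ccontr)
      assume "\<not> b n < c"
      then have "Q c \<le> Q (b n)"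
        using c b_pos[of n] by (intro mono_onD[OF mono]) auto
      with elim show False
        by simp
    qed
    with c show ?case
      by simp
  qed
next
  fix r :: real
  assume "r < 0"
  then show "\<forall>\<^sub>F n in sequentially. r < b n"
    using b_pos by (intro always_eventually allI less_trans[OF \<open>r < 0\<close>])
qed

lemma tendsto_mult_if_powr_asymptotics:
  fixes Q :: "real \<Rightarrow> real" and b :: "nat \<Rightarrow> real" and \<alpha> \<delta> \<mu> :: real
  assumes \<alpha>: "\<alpha> > 0" and \<delta>: "\<delta> > 0" and \<mu>: "\<mu> > 0"
    and Q_at_0: "((\<lambda>c. Q c / c powr \<alpha>) \<longlongrightarrow> \<delta>) (at_right 0)"
    and b_pos: "\<And>n. b n > 0" and b_lim: "b \<longlonglongrightarrow> 0"
    and Q_b: "(\<lambda>n. real n powr \<alpha> * Q (b n)) \<longlonglongrightarrow> \<mu>"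
  shows "(\<lambda>n. real n * b n) \<longlonglongrightarrow> (\<mu> / \<delta>) powr (1 / \<alpha>)"
proof -
  have "filterlim b (at_right 0) sequentially"
    using b_lim b_pos by (intro tendsto_imp_filterlim_at_right) auto
  then have "(\<lambda>n. Q (b n) / b n powr \<alpha>) \<longlonglongrightarrow> \<delta>"
    by (rule filterlim_compose[OF Q_at_0])
  with Q_b \<delta> have "(\<lambda>n. (real n powr \<alpha> * Q (b n)) / (Q (b n) / b n powr \<alpha>)) \<longlonglongrightarrow> \<mu> / \<delta>"
    by (intro tendsto_divide) auto
  moreover have "\<forall>\<^sub>F n in sequentially.
      (real n powr \<alpha> * Q (b n)) / (Q (b n) / b n powr \<alpha>) = (real n * b n) powr \<alpha>"
    using order_tendstoD(1)[OF Q_b \<mu>]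
  proof eventually_elim
    case (elim n)
    then have "Q (b n) \<noteq> 0"
      by auto
    with b_pos[of n] show ?case
      by (simp add: powr_mult)
  qed
  ultimately have "(\<lambda>n. (real n * b n) powr \<alpha>) \<longlonglongrightarrow> \<mu> / \<delta>"
    by (rule Lim_transform_eventually)
  then have "(\<lambda>n. ((real n * b n) powr \<alpha>) powr (1 / \<alpha>)) \<longlonglongrightarrow> (\<mu> / \<delta>) powr (1 / \<alpha>)"
    using \<mu> \<delta> by (intro tendsto_powr tendsto_const) auto
  moreover have "((real n * b n) powr \<alpha>) powr (1 / \<alpha>) = real n * b n" for n
    using \<alpha> b_pos[of n] by (simp add: powr_powr)
  ultimately show ?thesis
    by simp
qed

lemma tendsto_mult_one_minus_inverse_square:
  fixes a r :: "nat \<Rightarrow> real"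
  assumes a_lim: "a \<longlonglongrightarrow> 1" and a_nz: "\<And>n. a n \<noteq> 0"
    and rate: "(\<lambda>n. r n * (a n - 1)) \<longlonglongrightarrow> L"
  shows "(\<lambda>n. r n * (1 - 1 / (a n)\<^sup>2)) \<longlonglongrightarrow> 2 * L"
proof -
  have "(\<lambda>n. r n * (a n - 1) * ((a n + 1) / (a n)\<^sup>2)) \<longlonglongrightarrow> L * ((1 + 1) / 1\<^sup>2)"
    by (intro tendsto_mult rate tendsto_intros a_lim) auto
  moreover have "r n * (a n - 1) * ((a n + 1) / (a n)\<^sup>2) = r n * (1 - 1 / (a n)\<^sup>2)" for n
    using a_nz[of n] by (simp add: field_simps power2_eq_square)
  ultimately show ?thesis
    by (simp add: mult.commute)
qed

locale nonneg_prob_density =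
  fixes \<phi> :: "real \<Rightarrow> real" and F :: "real \<Rightarrow> real"
  assumes meas: "set_borel_measurable lborel {0..} \<phi>"
    and nonneg: "\<And>x. x \<ge> 0 \<Longrightarrow> \<phi> x \<ge> 0"
    and integrable: "set_integrable lborel {0..} \<phi>"
    and total: "(LINT s:{0..}|lborel. \<phi> s) = 1"
    and F_def: "\<And>x. F x = (LINT s:{0..x}|lborel. \<phi> s)"
begin

definition \<phi>\<^sub>0 :: "real \<Rightarrow> real" where
  "\<phi>\<^sub>0 s = indicator {0..} s * \<phi> s"

lemma \<phi>\<^sub>0_measurable [measurable]: "\<phi>\<^sub>0 \<in> borel_measurable borel"
  using meas by (simp add: set_borel_measurable_def \<phi>\<^sub>0_def[abs_def])

lemma \<phi>\<^sub>0_nonneg: "\<phi>\<^sub>0 s \<ge> 0"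
  using nonneg by (simp add: \<phi>\<^sub>0_def indicator_def)

lemma \<phi>\<^sub>0_integrable: "integrable lborel \<phi>\<^sub>0"
  using integrable by (simp add: set_integrable_def \<phi>\<^sub>0_def[abs_def])

lemma set_integral_nonneg:
  assumes "A \<subseteq> {0..}"
  shows "(LINT s:A|lborel. \<phi> s) \<ge> 0"
  unfolding set_lebesgue_integral_def
  using assms nonneg by (intro Bochner_Integration.integral_nonneg) (auto simp: indicator_def)

lemma one_minus_F_eq_tail:
  assumes "t \<ge> 0"
  shows "1 - F t = (LINT s:{t<..}|lborel. \<phi> s)"
proof -
  have "(LINT s:{0..t} \<union> {t<..}|lborel. \<phi> s) = F t + (LINT s:{t<..}|lborel. \<phi> s)"
    unfolding F_def using assms by (intro set_integral_Un set_integrable_subset[OF integrable]) auto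
  moreover have "{0..t} \<union> {t<..} = {0..}"
    using assms by auto
  ultimately show ?thesis
    using total by simp
qed

lemma F_nonneg: "F x \<ge> 0"
  unfolding F_def by (rule set_integral_nonneg) auto

lemma F_le_1: "F x \<le> 1"
proof (cases "x \<ge> 0")
  case True
  have "{x<..} \<subseteq> {0..}"
    using True by auto
  then show ?thesis
    using one_minus_F_eq_tail[OF True] set_integral_nonneg[of "{x<..}"] by simp
qed (simp add: F_def set_lebesgue_integral_def)

lemma mono_F: "mono F"
proof
  fix x y :: real
  assume "x \<le> y"
  show "F x \<le> F y"
  proof (cases "x \<ge> 0")
    case True
    have "(LINT s:{0..x} \<union> {x<..y}|lborel. \<phi> s) = F x + (LINT s:{x<..y}|lborel. \<phi> s)"
      unfolding F_def using True by (intro set_integral_Un set_integrable_subset[OF integrable]) auto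
    moreover have "{0..x} \<union> {x<..y} = {0..y}"
      using True \<open>x \<le> y\<close> by auto
    moreover have "(LINT s:{x<..y}|lborel. \<phi> s) \<ge> 0"
      using True by (intro set_integral_nonneg) auto
    ultimately show ?thesis
      by (simp add: F_def)
  qed (use F_nonneg[of y] in \<open>simp add: F_def[of x] set_lebesgue_integral_def\<close>)
qed

lemma borel_measurable_F [measurable]: "F \<in> borel_measurable borel"
  by (rule borel_measurable_mono[OF mono_F])

lemma nn_integral_tail_eq_one_minus_F:
  assumes "t \<ge> 0"
  shows "(\<integral>\<^sup>+s\<in>{t<..}. ennreal (\<phi>\<^sub>0 s) \<partial>lborel) = ennreal (1 - F t)"
proof -
  have "(LINT s:{t<..}|lborel. \<phi>\<^sub>0 s) = (LINT s:{t<..}|lborel. \<phi> s)"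
    unfolding set_lebesgue_integral_def
    using assms by (intro Bochner_Integration.integral_cong) (auto simp: \<phi>\<^sub>0_def indicator_def)
  then show ?thesis
    using nn_set_integral_eq_set_integral[OF \<phi>\<^sub>0_integrable] \<phi>\<^sub>0_nonneg one_minus_F_eq_tail[OF assms]
    by simp
qed

definition Laplace :: "real \<Rightarrow> real" where
  "Laplace c = (LINT s:{0..}|lborel. exp (- c * s) * \<phi> s)"

lemma Laplace_eq_integral: "Laplace c = (\<integral>s. exp (- c * s) * \<phi>\<^sub>0 s \<partial>lborel)"
  unfolding Laplace_def set_lebesgue_integral_def
  by (intro Bochner_Integration.integral_cong) (auto simp: \<phi>\<^sub>0_def indicator_def)

lemma integrable_Laplace:
  assumes "c \<ge> 0"
  shows "integrable lborel (\<lambda>s. exp (- c * s) * \<phi>\<^sub>0 s)"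
proof (rule Bochner_Integration.integrable_bound[OF \<phi>\<^sub>0_integrable])
  show "AE s in lborel. norm (exp (- c * s) * \<phi>\<^sub>0 s) \<le> norm (\<phi>\<^sub>0 s)"
  proof (intro AE_I2)
    fix s :: real
    show "norm (exp (- c * s) * \<phi>\<^sub>0 s) \<le> norm (\<phi>\<^sub>0 s)"
    proof (cases "s \<ge> 0")
      case True
      with assms have "exp (- c * s) \<le> 1"
        by simp
      then show ?thesis
        using \<phi>\<^sub>0_nonneg[of s] by (simp add: mult_left_le_one_le)
    qed (simp add: \<phi>\<^sub>0_def)
  qed
qed simp

lemma Laplace_antimono:
  assumes "0 \<le> c" "c \<le> c'"
  shows "Laplace c' \<le> Laplace c"
proof -
  have "exp (- c' * s) * \<phi>\<^sub>0 s \<le> exp (- c * s) * \<phi>\<^sub>0 s" for s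
  proof (cases "s \<ge> 0")
    case True
    with assms show ?thesis
      using \<phi>\<^sub>0_nonneg[of s] by (intro mult_right_mono) (auto intro: mult_right_mono)
  qed (simp add: \<phi>\<^sub>0_def)
  with assms show ?thesis
    unfolding Laplace_eq_integral by (intro integral_mono integrable_Laplace) auto
qed

lemma Laplace_eq_inverse_square:
  assumes "a > 0" and "(LINT s:{0..}|lborel. exp (- c * s) * a * \<phi> s) = 1 / a"
  shows "Laplace c = 1 / a\<^sup>2"
proof -
  have "a * Laplace c = (LINT s:{0..}|lborel. a * (exp (- c * s) * \<phi> s))"
    by (simp add: Laplace_def)
  also have "\<dots> = 1 / a"
    using assms(2) by (simp add: ac_simps)
  finally show ?thesis
    using assms(1) by (simp add: field_simps power2_eq_square)
qed

lemma Laplace_le_1: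
  assumes "c \<ge> 0"
  shows "Laplace c \<le> 1"
  using Laplace_antimono[OF order.refl assms] total by (simp add: Laplace_def)

lemma ennreal_one_minus_Laplace:
  assumes c: "c \<ge> 0"
  shows "ennreal (1 - Laplace c) = (\<integral>\<^sup>+s\<in>{0..}. ennreal (1 - exp (- c * s)) * ennreal (\<phi>\<^sub>0 s) \<partial>lborel)"
proof -
  have "integral\<^sup>L lborel \<phi>\<^sub>0 = 1"
    using total unfolding set_lebesgue_integral_def \<phi>\<^sub>0_def[abs_def] by simp
  then have "1 - Laplace c = (\<integral>s. (1 - exp (- c * s)) * \<phi>\<^sub>0 s \<partial>lborel)"
    using c \<phi>\<^sub>0_integrable integrable_Laplace[OF c]
    by (simp add: Laplace_eq_integral left_diff_distrib)
  also have "\<dots> = (\<integral>\<^sup>+s. ennreal ((1 - exp (- c * s)) * \<phi>\<^sub>0 s) \<partial>lborel)"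
  proof (rule nn_integral_eq_integral[symmetric])
    show "integrable lborel (\<lambda>s. (1 - exp (- c * s)) * \<phi>\<^sub>0 s)"
      using \<phi>\<^sub>0_integrable integrable_Laplace[OF c] by (simp add: left_diff_distrib)
    show "AE s in lborel. 0 \<le> (1 - exp (- c * s)) * \<phi>\<^sub>0 s"
    proof (intro AE_I2)
      fix s :: real
      show "0 \<le> (1 - exp (- c * s)) * \<phi>\<^sub>0 s"
        using c \<phi>\<^sub>0_nonneg[of s] by (cases "s \<ge> 0") (auto simp: \<phi>\<^sub>0_def)
    qed
  qed
  also have "\<dots> = (\<integral>\<^sup>+s\<in>{0..}. ennreal (1 - exp (- c * s)) * ennreal (\<phi>\<^sub>0 s) \<partial>lborel)"
    using c nonneg by (intro nn_integral_cong) (auto simp: \<phi>\<^sub>0_def indicator_def ennreal_mult)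
  finally show ?thesis .
qed

lemma one_minus_Laplace_eq:
  assumes c: "c > 0"
  shows "1 - Laplace c = (LINT u:{0<..}|lborel. exp (- u) * (1 - F (u / c)))"
proof -
  have "ennreal (1 - Laplace c)
      = (\<integral>\<^sup>+t\<in>{0<..}. ennreal (c * exp (- c * t)) * (\<integral>\<^sup>+s\<in>{t<..}. ennreal (\<phi>\<^sub>0 s) \<partial>lborel) \<partial>lborel)"
    unfolding ennreal_one_minus_Laplace[OF less_imp_le[OF c]]
    by (rule nn_integral_one_minus_exp_eq_tail) (use c in auto)
  also have "\<dots> = (\<integral>\<^sup>+u\<in>{0<..}. ennreal (exp (- u)) * (\<integral>\<^sup>+s\<in>{u / c<..}. ennreal (\<phi>\<^sub>0 s) \<partial>lborel) \<partial>lborel)"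
  proof (rule nn_integral_exponential_density_rescale[OF _ c])
    show "(\<lambda>t. \<integral>\<^sup>+s\<in>{t<..}. ennreal (\<phi>\<^sub>0 s) \<partial>lborel) \<in> borel_measurable borel"
      unfolding greaterThan_def by measurable
  qed
  also have "\<dots> = (\<integral>\<^sup>+u. ennreal (indicator {0<..} u * (exp (- u) * (1 - F (u / c)))) \<partial>lborel)"
  proof (rule nn_integral_cong)
    fix u :: real
    show "ennreal (exp (- u)) * (\<integral>\<^sup>+s\<in>{u / c<..}. ennreal (\<phi>\<^sub>0 s) \<partial>lborel) * indicator {0<..} u
        = ennreal (indicator {0<..} u * (exp (- u) * (1 - F (u / c))))"
    proof (cases "u > 0")
      case True
      then show ?thesis
        using c nn_integral_tail_eq_one_minus_F[of "u / c"] F_le_1[of "u / c"] by (simp add: ennreal_mult)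
    qed simp
  qed
  finally show ?thesis
    using c F_le_1 Laplace_le_1[of c]
    by (subst (asm) eq_commute, subst (asm) nn_integral_eq_integrable) (auto simp: set_lebesgue_integral_def)
qed

lemma Laplace_asymptotics:
  assumes "0 < \<alpha>" "\<alpha> < 1" and tail: "((\<lambda>x. x powr \<alpha> * (1 - F x)) \<longlongrightarrow> C) at_top"
  shows "((\<lambda>c. (1 - Laplace c) / c powr \<alpha>) \<longlongrightarrow> C * Gamma (1 - \<alpha>)) (at_right 0)"
proof -
  have "((\<lambda>c. (LINT u:{0<..}|lborel. exp (- u) * (1 - F (u / c))) / c powr \<alpha>)
      \<longlongrightarrow> C * Gamma (1 - \<alpha>)) (at_right 0)"
    using assms F_nonneg F_le_1 by (intro tendsto_Laplace_regular_tail[where B = 1]) auto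
  moreover have "\<forall>\<^sub>F c in at_right 0. (LINT u:{0<..}|lborel. exp (- u) * (1 - F (u / c))) / c powr \<alpha>
      = (1 - Laplace c) / c powr \<alpha>"
    using eventually_at_right_less[of 0] by eventually_elim (simp add: one_minus_Laplace_eq)
  ultimately show ?thesis
    by (rule Lim_transform_eventually)
qed

end

theorem lemma2p1:
  fixes \<phi> :: "real \<Rightarrow> real" and F :: "real \<Rightarrow> real"
    and \<alpha> K \<delta> lam :: real and a b :: "nat \<Rightarrow> real"
  assumes meas: "set_borel_measurable lborel {0..} \<phi>"
    and nonneg: "\<And>x. x \<ge> 0 \<Longrightarrow> \<phi> x \<ge> 0"
    and int1: "set_integrable lborel {0..} \<phi>" "(LINT s:{0..}|lborel. \<phi> s) = 1"
    and F_def: "\<And>x. F x = (LINT s:{0..x}|lborel. \<phi> s)"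
    and alpha: "0 < \<alpha>" "\<alpha> < 1" and Kpos: "K > 0"
    and tail: "((\<lambda>x. \<alpha> * x powr \<alpha> * (1 - F x)) \<longlongrightarrow> K) at_top"
    and delta_def: "\<delta> = K * Gamma (1 - \<alpha>) / \<alpha>"
    and lam_pos: "lam > 0"
    and a_gt: "\<And>n. a n > 1" and a_lim: "a \<longlonglongrightarrow> 1"
    and a_rate: "(\<lambda>n. real n powr \<alpha> * (a n - 1)) \<longlonglongrightarrow> lam * \<delta>"
    and b_pos: "\<And>n. b n > 0"
    and b_eq: "\<And>n. (LINT s:{0..}|lborel. exp (- b n * s) * a n * \<phi> s) = 1 / a n"
    and b_unique: "\<And>n c. c > 0 \<Longrightarrow> (LINT s:{0..}|lborel. exp (- c * s) * a n * \<phi> s) = 1 / a n \<Longrightarrow> c = b n"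
  shows "(\<lambda>n. real n * b n) \<longlonglongrightarrow> (2 * lam) powr (1 / \<alpha>)"
proof -
  interpret nonneg_prob_density \<phi> F
    using meas nonneg int1 F_def by unfold_locales
  have \<delta>_pos: "\<delta> > 0"
    unfolding delta_def using Kpos alpha by (simp add: Gamma_real_pos)
  have "((\<lambda>x. \<alpha> * x powr \<alpha> * (1 - F x) / \<alpha>) \<longlongrightarrow> K / \<alpha>) at_top"
    using tail alpha by (intro tendsto_divide) auto
  then have Laplace_0: "((\<lambda>c. (1 - Laplace c) / c powr \<alpha>) \<longlongrightarrow> \<delta>) (at_right 0)"
    using Laplace_asymptotics[OF alpha, of "K / \<alpha>"] alpha by (simp add: delta_def)
  have Laplace_b: "1 - Laplace (b n) = 1 - 1 / (a n)\<^sup>2" for n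
    using Laplace_eq_inverse_square[OF _ b_eq] a_gt[of n] by simp
  have "b \<longlonglongrightarrow> 0"
  proof (rule tendsto_zero_if_mono_on_image_tendsto_zero[where Q = "\<lambda>c. 1 - Laplace c"])
    show "mono_on {0<..} (\<lambda>c. 1 - Laplace c)"
      by (intro mono_onI) (simp add: Laplace_antimono)
    show "\<forall>\<^sub>F c in at_right 0. 1 - Laplace c > 0"
      using order_tendstoD(1)[OF Laplace_0 \<delta>_pos] eventually_at_right_less[of 0]
      by eventually_elim (simp add: zero_less_divide_iff)
    show "(\<lambda>n. 1 - Laplace (b n)) \<longlonglongrightarrow> 0"
      unfolding Laplace_b using a_lim by (intro tendsto_eq_intros) auto
  qed (fact b_pos)
  moreover have "(\<lambda>n. real n powr \<alpha> * (1 - Laplace (b n))) \<longlonglongrightarrow> 2 * (lam * \<delta>)"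
    unfolding Laplace_b
    by (intro tendsto_mult_one_minus_inverse_square a_lim a_rate) (smt (verit) a_gt)
  ultimately have "(\<lambda>n. real n * b n) \<longlonglongrightarrow> (2 * (lam * \<delta>) / \<delta>) powr (1 / \<alpha>)"
    using alpha \<delta>_pos lam_pos by (intro tendsto_mult_if_powr_asymptotics[OF _ _ _ Laplace_0 b_pos]) auto
  then show ?thesis
    using \<delta>_pos by simp
qed

end
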